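(* Let $\mathcal U=(V,\tilde V,W,\tilde W,R)$ be an ordered gradient space, let $\psi_1,\psi_2\in B_+$, and set $\Omega'(\psi_1,\psi_2)=\{v\in V:0\le v\le\psi_1\text{ and }v\le\psi_2\}$. Then there exists a unique $u\in\Omega'(\psi_1,\psi_2)$ such that $\|\max(\psi_1,\psi_2)-u\|_V=\inf_{v\in\Omega'(\psi_1,\psi_2)}\|\max(\psi_1,\psi_2)-v\|_V$.
   Context: A gradient space $\mathcal U=(V,\tilde V,W,\tilde W,R)$ consists of vector spaces $\tilde V,\tilde W$ over $\mathbf R$ or $\mathbf C$, a relation $R\subseteq\tilde V\times\tilde W$ closed under addition and under multiplication by positive scalars, and linear subspaces $V\subseteq\tilde V$, $W\subseteq\tilde W$ such that $V$ is a reflexive Banach space (norm $\|\cdot\|_V$), $W$ is a reflexive strictly convex Banach space, for every $(u,g)\in R\cap(V\times W)$ there is $g'\in W$ with $(-u,g')\in R$, and $R\cap(V\times W)$ is closed in $V\times W$. A linear preorder on $\tilde V$ is a relation $\le$ with: $a\le a$; $a\le b,\ b\le c\Rightarrow a\le c$; $b\le c\Rightarrow a+b\le a+c$; $a\le b,\ \alpha\in[0,\infty)\Rightarrow\alpha a\le\alpha b$. A preordered gradient space is a gradient space with a linear preorder $\le$ on $\tilde V$ such that if $u_i\in V$, $\psi\in\tilde V$, $u_i\le\psi$ for all $i$ and $u_i\to u$ in $V$, then $u\le\psi$. An ordered gradient space is a preordered gradient space such that $V$ is strictly convex and, for $u,v\in V$, $0\le u\le v$ implies $\|u\|_V\le\|v\|_V$.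 Define $B_+=\{\psi\in\tilde V:0\le\psi\le u\text{ for some }u\in V\}$. For $\psi_1,\psi_2\in B_+$, $\max(\psi_1,\psi_2)$ denotes the unique element $u$ of $\Omega(\psi_1,\psi_2)=\{u\in V:u\ge\psi_1,\ u\ge\psi_2\}$ minimizing $\|u\|_V$ over $\Omega(\psi_1,\psi_2)$ (it exists and is unique). *)

theory Defs
  imports "HOL-Analysis.Analysis"
begin

definition reflexive_space :: "'a::banach itself \<Rightarrow> bool" where
  "reflexive_space _ \<longleftrightarrow>
     (\<forall>\<Phi> :: ('a \<Rightarrow>\<^sub>L real) \<Rightarrow>\<^sub>L real. \<exists>x::'a. \<forall>f. blinfun_apply \<Phi> f = blinfun_apply f x)"

definition strictly_convex_space :: "'a::real_normed_vector itself \<Rightarrow> bool" where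
  "strictly_convex_space _ \<longleftrightarrow>
     (\<forall>x y::'a. norm x = 1 \<and> norm y = 1 \<and> x \<noteq> y \<longrightarrow> norm ((1/2) *\<^sub>R (x + y)) < 1)"

text \<open>Gradient space: V and W are Banach space types embedded linearly and injectively
(maps iV, iW) into the ambient vector spaces Vt, Wt; R is a relation on Vt x Wt.\<close>
definition gradient_space ::
  "('v::banach \<Rightarrow> 'vt::real_vector) \<Rightarrow> ('w::banach \<Rightarrow> 'wt::real_vector) \<Rightarrow> ('vt \<times> 'wt) set \<Rightarrow> bool" where
  "gradient_space iV iW R \<longleftrightarrow>
     linear iV \<and> inj iV \<and> linear iW \<and> inj iW \<and>
     (\<forall>a b c d. (a, b) \<in> R \<and> (c, d) \<in> R \<longrightarrow> (a + c, b + d) \<in> R) \<and>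
     (\<forall>a b (\<alpha>::real). (a, b) \<in> R \<and> \<alpha> > 0 \<longrightarrow> (\<alpha> *\<^sub>R a, \<alpha> *\<^sub>R b) \<in> R) \<and>
     reflexive_space TYPE('v) \<and>
     reflexive_space TYPE('w) \<and> strictly_convex_space TYPE('w) \<and>
     (\<forall>u g. (iV u, iW g) \<in> R \<longrightarrow> (\<exists>g'. (iV (- u), iW g') \<in> R)) \<and>
     closed {(u, g). (iV u, iW g) \<in> R}"

definition linear_preorder :: "('vt::real_vector \<Rightarrow> 'vt \<Rightarrow> bool) \<Rightarrow> bool" where
  "linear_preorder le \<longleftrightarrow>
     (\<forall>a. le a a) \<and>
     (\<forall>a b c. le a b \<and> le b c \<longrightarrow> le a c) \<and>
     (\<forall>a b c. le b c \<longrightarrow> le (a + b) (a + c)) \<and>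
     (\<forall>a b (\<alpha>::real). le a b \<and> \<alpha> \<ge> 0 \<longrightarrow> le (\<alpha> *\<^sub>R a) (\<alpha> *\<^sub>R b))"

definition preordered_gradient_space ::
  "('v::banach \<Rightarrow> 'vt::real_vector) \<Rightarrow> ('w::banach \<Rightarrow> 'wt::real_vector) \<Rightarrow> ('vt \<times> 'wt) set
    \<Rightarrow> ('vt \<Rightarrow> 'vt \<Rightarrow> bool) \<Rightarrow> bool" where
  "preordered_gradient_space iV iW R le \<longleftrightarrow>
     gradient_space iV iW R \<and> linear_preorder le \<and>
     (\<forall>(u::nat \<Rightarrow> 'v) x \<psi>. (\<forall>i. le (iV (u i)) \<psi>) \<and> u \<longlonglongrightarrow> x \<longrightarrow> le (iV x) \<psi>)"

definition ordered_gradient_space ::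
  "('v::banach \<Rightarrow> 'vt::real_vector) \<Rightarrow> ('w::banach \<Rightarrow> 'wt::real_vector) \<Rightarrow> ('vt \<times> 'wt) set
    \<Rightarrow> ('vt \<Rightarrow> 'vt \<Rightarrow> bool) \<Rightarrow> bool" where
  "ordered_gradient_space iV iW R le \<longleftrightarrow>
     preordered_gradient_space iV iW R le \<and> strictly_convex_space TYPE('v) \<and>
     (\<forall>u v. le 0 (iV u) \<and> le (iV u) (iV v) \<longrightarrow> norm u \<le> norm v)"

definition B_plus :: "('v \<Rightarrow> 'vt::real_vector) \<Rightarrow> ('vt \<Rightarrow> 'vt \<Rightarrow> bool) \<Rightarrow> 'vt set" where
  "B_plus iV le = {\<psi>. le 0 \<psi> \<and> (\<exists>u. le \<psi> (iV u))}"

definition Omega_up :: "('v \<Rightarrow> 'vt) \<Rightarrow> ('vt \<Rightarrow> 'vt \<Rightarrow> bool) \<Rightarrow> 'vt \<Rightarrow> 'vt \<Rightarrow> 'v set" where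
  "Omega_up iV le \<psi>1 \<psi>2 = {u. le \<psi>1 (iV u) \<and> le \<psi>2 (iV u)}"

text \<open>max(psi1,psi2): the (unique) element of least norm of Omega(psi1,psi2).\<close>
definition gmax :: "('v::real_normed_vector \<Rightarrow> 'vt) \<Rightarrow> ('vt \<Rightarrow> 'vt \<Rightarrow> bool) \<Rightarrow> 'vt \<Rightarrow> 'vt \<Rightarrow> 'v" where
  "gmax iV le \<psi>1 \<psi>2 =
     (THE u. u \<in> Omega_up iV le \<psi>1 \<psi>2 \<and> (\<forall>v \<in> Omega_up iV le \<psi>1 \<psi>2. norm u \<le> norm v))"

definition Omega_down :: "('v \<Rightarrow> 'vt::zero) \<Rightarrow> ('vt \<Rightarrow> 'vt \<Rightarrow> bool) \<Rightarrow> 'vt \<Rightarrow> 'vt \<Rightarrow> 'v set" where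
  "Omega_down iV le \<psi>1 \<psi>2 = {v. le 0 (iV v) \<and> le (iV v) \<psi>1 \<and> le (iV v) \<psi>2}"

end

theory Submission
  imports Defs
begin

text \<open>The set \<open>\<Omega>'(\<psi>1,\<psi>2)\<close> contains \<open>0\<close> and is closed and convex, so it suffices that every nonempty
  closed convex set \<open>C\<close> of a reflexive, strictly convex Banach space has exactly one point nearest to a
  given \<open>g\<close>. Uniqueness: the midpoint of two nearest points would be strictly nearer. Existence: a
  minimizing sequence \<open>x\<^sub>n\<close> is bounded; a Hahn--Banach functional below \<open>f \<mapsto> limsup f(x\<^sub>n)\<close> on the
  dual is represented, by reflexivity, by some \<open>x\<^sub>0\<close>, and separation shows that \<open>x\<^sub>0\<close> lies in every
  bounded closed convex set containing a tail of the sequence, in particular in \<open>C\<close> at distance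
  \<open>\<le> inf\<close> from \<open>g\<close>. Hahn--Banach itself follows from Zorn's lemma, since sublinear functionals that
  are minimal below a given one are linear.\<close>

definition sublinear :: "('a::real_vector \<Rightarrow> real) \<Rightarrow> bool" where
  "sublinear p \<longleftrightarrow> (\<forall>x y. p (x + y) \<le> p x + p y) \<and> (\<forall>c>0. \<forall>x. p (c *\<^sub>R x) = c * p x)"

lemma sublinear_add: "sublinear p \<Longrightarrow> p (x + y) \<le> p x + p y"
  unfolding sublinear_def by blast

lemma sublinear_scaleR: "sublinear p \<Longrightarrow> c > 0 \<Longrightarrow> p (c *\<^sub>R x) = c * p x"
  unfolding sublinear_def by blast

lemma sublinear_0: "sublinear p \<Longrightarrow> p 0 = 0"
  using sublinear_scaleR[of p 2 0] by simp

lemma sublinear_scaleR_nonneg: "sublinear p \<Longrightarrow> c \<ge> 0 \<Longrightarrow> p (c *\<^sub>R x) = c * p x"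
  by (cases "c = 0") (simp_all add: sublinear_0 sublinear_scaleR)

lemma sublinear_minus: "sublinear p \<Longrightarrow> - p (- x) \<le> p x"
  using sublinear_add[of p x "- x"] sublinear_0[of p] by simp

lemma sublinearI:
  assumes add: "\<And>x y. p (x + y) \<le> p x + p y"
    and scale: "\<And>c x. c > 0 \<Longrightarrow> p (c *\<^sub>R x) \<le> c * p x"
  shows "sublinear p"
  unfolding sublinear_def
proof (intro conjI allI impI add)
  fix c :: real and x assume c: "c > 0"
  have "p x = p ((1/c) *\<^sub>R (c *\<^sub>R x))" using c by simp
  also have "\<dots> \<le> (1/c) * p (c *\<^sub>R x)" using c by (intro scale) auto
  finally have "c * p x \<le> p (c *\<^sub>R x)" using c by (simp add: field_simps)
  with scale[OF c, of x] show "p (c *\<^sub>R x) = c * p x" by linarith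
qed

text \<open>The shift of \<open>q\<close> in direction \<open>z\<close> is sublinear, lies below \<open>q\<close>, and is \<open>\<le> -q z\<close> at \<open>-z\<close>;
  so a sublinear functional that is minimal below \<open>q\<close> is odd, hence linear.\<close>

definition sublinear_shift :: "('a::real_vector \<Rightarrow> real) \<Rightarrow> 'a \<Rightarrow> 'a \<Rightarrow> real" where
  "sublinear_shift q z y = (INF t\<in>{0..}. q (y + t *\<^sub>R z) - t * q z)"

lemma bdd_below_sublinear_shift:
  assumes q: "sublinear q"
  shows "bdd_below ((\<lambda>t. q (y + t *\<^sub>R z) - t * q z) ` {0..})"
proof (rule bdd_belowI2[where m="- q (- y)"])
  fix t :: real assume "t \<in> {0..}"
  hence "q (t *\<^sub>R z) = t * q z" using sublinear_scaleR_nonneg[OF q] by simp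
  moreover have "q ((y + t *\<^sub>R z) + (- y)) \<le> q (y + t *\<^sub>R z) + q (- y)"
    by (rule sublinear_add[OF q])
  ultimately show "- q (- y) \<le> q (y + t *\<^sub>R z) - t * q z" by simp
qed

lemma sublinear_shift_le:
  "sublinear q \<Longrightarrow> t \<ge> 0 \<Longrightarrow> sublinear_shift q z y \<le> q (y + t *\<^sub>R z) - t * q z"
  unfolding sublinear_shift_def by (rule cINF_lower[OF bdd_below_sublinear_shift]) auto

lemma sublinear_shift_greatest:
  "(\<And>t. t \<ge> 0 \<Longrightarrow> m \<le> q (y + t *\<^sub>R z) - t * q z) \<Longrightarrow> m \<le> sublinear_shift q z y"
  unfolding sublinear_shift_def by (rule cINF_greatest) auto

lemma sublinear_shift_le_self: "sublinear q \<Longrightarrow> sublinear_shift q z y \<le> q y"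
  using sublinear_shift_le[of q 0 z y] by simp

lemma sublinear_shift_minus: "sublinear q \<Longrightarrow> sublinear_shift q z (- z) \<le> - q z"
  using sublinear_shift_le[of q 1 z "- z"] sublinear_0[of q] by simp

lemma sublinear_sublinear_shift:
  assumes q: "sublinear q"
  shows "sublinear (sublinear_shift q z)"
proof (rule sublinearI)
  let ?s = "sublinear_shift q z"
  fix x y
  have "?s (x + y) - q (x + t1 *\<^sub>R z) + t1 * q z \<le> ?s y" if t1: "t1 \<ge> 0" for t1
  proof (rule sublinear_shift_greatest)
    fix t2 :: real assume t2: "t2 \<ge> 0"
    have "(x + y) + (t1 + t2) *\<^sub>R z = (x + t1 *\<^sub>R z) + (y + t2 *\<^sub>R z)"
      by (simp add: algebra_simps)
    hence "q ((x + y) + (t1 + t2) *\<^sub>R z) \<le> q (x + t1 *\<^sub>R z) + q (y + t2 *\<^sub>R z)"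
      by (simp only: sublinear_add[OF q])
    moreover have "?s (x + y) \<le> q ((x + y) + (t1 + t2) *\<^sub>R z) - (t1 + t2) * q z"
      using t1 t2 by (intro sublinear_shift_le[OF q]) auto
    ultimately show "?s (x + y) - q (x + t1 *\<^sub>R z) + t1 * q z \<le> q (y + t2 *\<^sub>R z) - t2 * q z"
      by (simp add: algebra_simps)
  qed
  hence "?s (x + y) - ?s y \<le> ?s x"
    by (intro sublinear_shift_greatest) (simp add: algebra_simps)
  thus "?s (x + y) \<le> ?s x + ?s y" by simp
next
  fix c :: real and y assume c: "c > 0"
  have "sublinear_shift q z (c *\<^sub>R y) / c \<le> sublinear_shift q z y"
  proof (rule sublinear_shift_greatest)
    fix t :: real assume t: "t \<ge> 0"
    have "c *\<^sub>R y + (c * t) *\<^sub>R z = c *\<^sub>R (y + t *\<^sub>R z)" by (simp add: scaleR_add_right)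
    hence "q (c *\<^sub>R y + (c * t) *\<^sub>R z) = c * q (y + t *\<^sub>R z)"
      using sublinear_scaleR[OF q c] by simp
    moreover have "sublinear_shift q z (c *\<^sub>R y) \<le> q (c *\<^sub>R y + (c * t) *\<^sub>R z) - (c * t) * q z"
      using t c by (intro sublinear_shift_le[OF q]) auto
    ultimately show "sublinear_shift q z (c *\<^sub>R y) / c \<le> q (y + t *\<^sub>R z) - t * q z"
      using c by (simp add: field_simps)
  qed
  thus "sublinear_shift q z (c *\<^sub>R y) \<le> c * sublinear_shift q z y"
    using c by (simp add: field_simps)
qed

lemma minimal_sublinear_imp_linear:
  assumes q: "sublinear q"
    and minimal: "\<And>q'. sublinear q' \<Longrightarrow> q' \<le> q \<Longrightarrow> q' = q"
  shows "linear q"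
proof -
  have minus: "q (- x) = - q x" for x
  proof -
    have "sublinear_shift q x = q"
      using minimal sublinear_sublinear_shift[OF q] sublinear_shift_le_self[OF q] by (simp add: le_fun_def)
    thus ?thesis using sublinear_shift_minus[OF q, of x] sublinear_minus[OF q, of x] by simp
  qed
  have add: "q (x + y) = q x + q y" for x y
    using sublinear_add[OF q, of x y] sublinear_add[OF q, of "- x" "- y"] minus[of "x + y"]
    by (simp add: minus)
  have scale: "q (c *\<^sub>R x) = c * q x" for c x
  proof (cases "c \<ge> 0")
    case True thus ?thesis by (rule sublinear_scaleR_nonneg[OF q])
  next
    case False
    hence "q ((- c) *\<^sub>R x) = (- c) * q x" by (intro sublinear_scaleR_nonneg[OF q]) simp
    thus ?thesis using minus[of "c *\<^sub>R x"] by simp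
  qed
  show ?thesis by (rule linearI) (simp_all add: add scale)
qed

lemma bdd_below_dominated_sublinear:
  assumes sub: "\<And>q. q \<in> C \<Longrightarrow> sublinear q" and dom: "\<And>q. q \<in> C \<Longrightarrow> q \<le> p"
  shows "bdd_below ((\<lambda>q. q x) ` C)"
proof (rule bdd_belowI2[where m="- p (- x)"])
  fix q assume "q \<in> C"
  thus "- p (- x) \<le> q x" using sublinear_minus[OF sub, of q x] le_funD[OF dom, of q "- x"] by linarith
qed

lemma sublinear_chain_INF:
  assumes ne: "C \<noteq> {}"
    and sub: "\<And>q. q \<in> C \<Longrightarrow> sublinear q" and dom: "\<And>q. q \<in> C \<Longrightarrow> q \<le> p"
    and chain: "\<And>q1 q2. q1 \<in> C \<Longrightarrow> q2 \<in> C \<Longrightarrow> q1 \<le> q2 \<or> q2 \<le> q1"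
  shows "sublinear (\<lambda>x. INF q\<in>C. q x)"
proof -
  have lower: "(INF q\<in>C. q x) \<le> q x" if "q \<in> C" for q x
    by (rule cINF_lower[OF bdd_below_dominated_sublinear[OF sub dom] that])
  have greatest: "m \<le> (INF q\<in>C. q x)" if "\<And>q. q \<in> C \<Longrightarrow> m \<le> q x" for m x
    using ne that by (rule cINF_greatest)
  show ?thesis
  proof (rule sublinearI)
    fix x y
    have "(INF q\<in>C. q (x + y)) - q1 x \<le> q2 y" if q12: "q1 \<in> C" "q2 \<in> C" for q1 q2
    proof -
      \<comment> \<open>the smaller of \<open>q1, q2\<close> is below both at once\<close>
      obtain q where q: "q \<in> C" "q x \<le> q1 x" "q y \<le> q2 y"
        using chain[OF q12] q12 by (auto dest: le_funD)
      thus ?thesis using lower[OF q(1), of "x + y"] sublinear_add[OF sub[OF q(1)], of x y] by linarith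
    qed
    hence "(INF q\<in>C. q (x + y)) - q1 x \<le> (INF q\<in>C. q y)" if "q1 \<in> C" for q1
      using that by (intro greatest) blast
    hence "(INF q\<in>C. q (x + y)) - (INF q\<in>C. q y) \<le> (INF q\<in>C. q x)"
      by (intro greatest) (simp add: algebra_simps)
    thus "(INF q\<in>C. q (x + y)) \<le> (INF q\<in>C. q x) + (INF q\<in>C. q y)" by simp
  next
    fix c :: real and x assume c: "c > 0"
    have "(INF q\<in>C. q (c *\<^sub>R x)) / c \<le> (INF q\<in>C. q x)"
    proof (rule greatest)
      fix q assume "q \<in> C"
      thus "(INF q\<in>C. q (c *\<^sub>R x)) / c \<le> q x"
        using lower[of q "c *\<^sub>R x"] sublinear_scaleR[OF sub c] c by (simp add: field_simps)
    qed
    thus "(INF q\<in>C. q (c *\<^sub>R x)) \<le> c * (INF q\<in>C. q x)" using c by (simp add: field_simps)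
  qed
qed

lemma linear_below_sublinear:
  assumes p: "sublinear p"
  obtains f where "linear f" "\<And>x. f x \<le> p x"
proof -
  define A where "A = {q. sublinear q \<and> q \<le> p}"
  have po: "partial_order_on A (relation_of (\<ge>) A)"
    by (rule partial_order_on_relation_ofI) auto
  have "\<exists>m\<in>A. \<forall>q\<in>A. m \<ge> q \<longrightarrow> q = m"
  proof (rule predicate_Zorn[OF po])
    fix C assume C: "C \<in> Chains (relation_of (\<ge>) A)"
    hence CA: "C \<subseteq> A" unfolding Chains_def relation_of_def by auto
    show "\<exists>u\<in>A. \<forall>q\<in>C. q \<ge> u"
    proof (cases "C = {}")
      case True
      thus ?thesis using p by (auto simp: A_def)
    next
      case False
      have sub: "\<And>q. q \<in> C \<Longrightarrow> sublinear q" and dom: "\<And>q. q \<in> C \<Longrightarrow> q \<le> p"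
        using CA by (auto simp: A_def)
      have chain: "q1 \<le> q2 \<or> q2 \<le> q1" if "q1 \<in> C" "q2 \<in> C" for q1 q2
        using C that unfolding Chains_def relation_of_def by blast
      have "sublinear (\<lambda>x. INF q\<in>C. q x)" by (rule sublinear_chain_INF[OF False sub dom chain])
      moreover have lower: "(\<lambda>x. INF q\<in>C. q x) \<le> q" if "q \<in> C" for q
        using cINF_lower[OF bdd_below_dominated_sublinear[OF sub dom] that] by (simp add: le_fun_def)
      moreover obtain q0 where "q0 \<in> C" using False by blast
      hence "(\<lambda>x. INF q\<in>C. q x) \<le> p" using lower dom by (blast intro: order.trans)
      ultimately show ?thesis unfolding A_def by blast
    qed
  qed
  then obtain m where m: "sublinear m" "m \<le> p" "\<And>q. sublinear q \<Longrightarrow> q \<le> m \<Longrightarrow> q = m"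
    unfolding A_def by (auto intro: order.trans)
  hence "linear m" by (intro minimal_sublinear_imp_linear)
  with m(2) show ?thesis using that by (auto dest: le_funD)
qed

lemma linear_below_sublinear_attaining:
  assumes p: "sublinear p"
  obtains f where "linear f" "\<And>x. f x \<le> p x" "f z = p z"
proof -
  obtain f where f: "linear f" "\<And>x. f x \<le> sublinear_shift p z x"
    using linear_below_sublinear[OF sublinear_sublinear_shift[OF p]] by blast
  have below: "f x \<le> p x" for x using f(2) sublinear_shift_le_self[OF p] order.trans by blast
  have "- f z \<le> - p z"
    using f(2)[of "- z"] sublinear_shift_minus[OF p, of z] linear_neg[OF f(1), of z] by simp
  with below[of z] have "f z = p z" by simp
  with f(1) below show ?thesis using that by blast
qed

lemma linear_bounded_above_imp_bounded_linear:
  fixes f :: "'a::real_normed_vector \<Rightarrow> real"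
  assumes f: "linear f" and bound: "\<And>x. f x \<le> K * norm x"
  shows "bounded_linear f"
proof (rule bounded_linear_intro[where K=K])
  show "f (x + y) = f x + f y" "f (c *\<^sub>R x) = c *\<^sub>R f x" for x y c
    using f by (simp_all add: linear_add linear_scale)
  show "norm (f x) \<le> norm x * K" for x
    using bound[of x] bound[of "- x"] linear_neg[OF f, of x] by (simp add: abs_le_iff mult.commute)
qed

definition minkowski_functional :: "'a::real_vector set \<Rightarrow> 'a \<Rightarrow> real" where
  "minkowski_functional A y = Inf {t. t > 0 \<and> (1/t) *\<^sub>R y \<in> A}"

context
  fixes A :: "'a::real_normed_vector set" and r :: real
  assumes r: "r > 0" and ball_subset: "ball 0 r \<subseteq> A"
begin

lemma greaterThan_subset_minkowski_set:
  "{norm y / r<..} \<subseteq> {t. t > 0 \<and> (1/t) *\<^sub>R y \<in> A}"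
proof
  fix t assume "t \<in> {norm y / r<..}"
  hence "norm y / r < t" by simp
  moreover have "0 \<le> norm y / r" using r by simp
  ultimately have t: "t > 0" "norm y < t * r" using r by (linarith, simp add: pos_divide_less_eq)
  hence "norm ((1/t) *\<^sub>R y) < r" by (simp add: pos_divide_less_eq mult.commute)
  thus "t \<in> {t. t > 0 \<and> (1/t) *\<^sub>R y \<in> A}" using t(1) ball_subset by auto
qed

lemma bdd_below_minkowski_set: "bdd_below {t. t > 0 \<and> (1/t) *\<^sub>R y \<in> A}"
  by (rule bdd_belowI[where m=0]) auto

lemma minkowski_set_nonempty: "{t. t > 0 \<and> (1/t) *\<^sub>R y \<in> A} \<noteq> {}"
  using greaterThan_subset_minkowski_set[of y] less_add_one[of "norm y / r"] by blast

lemma minkowski_functional_le: "t > 0 \<Longrightarrow> (1/t) *\<^sub>R y \<in> A \<Longrightarrow> minkowski_functional A y \<le> t"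
  unfolding minkowski_functional_def by (rule cInf_lower[OF _ bdd_below_minkowski_set]) simp

lemma minkowski_functional_greatest:
  "(\<And>t. t > 0 \<Longrightarrow> (1/t) *\<^sub>R y \<in> A \<Longrightarrow> m \<le> t) \<Longrightarrow> m \<le> minkowski_functional A y"
  unfolding minkowski_functional_def by (rule cInf_greatest[OF minkowski_set_nonempty]) simp

lemma minkowski_functional_le_norm: "minkowski_functional A y \<le> norm y / r"
  using cInf_superset_mono[OF _ bdd_below_minkowski_set greaterThan_subset_minkowski_set[of y]]
  unfolding minkowski_functional_def by simp

lemma one_le_minkowski_functional:
  assumes A: "convex A" and y: "y \<notin> A"
  shows "1 \<le> minkowski_functional A y"
proof (rule ccontr)
  assume "\<not> 1 \<le> minkowski_functional A y"
  then obtain t where t: "t > 0" "t < 1" "(1/t) *\<^sub>R y \<in> A"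
    using cInf_lessD[OF minkowski_set_nonempty, of y 1] unfolding minkowski_functional_def by force
  have "0 \<in> A" using ball_subset r by auto
  hence "t *\<^sub>R ((1/t) *\<^sub>R y) + (1 - t) *\<^sub>R 0 \<in> A"
    using t by (intro convexD[OF A t(3)]) simp_all
  with t y show False by simp
qed

lemma sublinear_minkowski_functional:
  assumes A: "convex A"
  shows "sublinear (minkowski_functional A)"
proof (rule sublinearI)
  let ?m = "minkowski_functional A"
  fix x y
  have "?m (x + y) \<le> t1 + t2"
    if t1: "t1 > 0" "(1/t1) *\<^sub>R x \<in> A" and t2: "t2 > 0" "(1/t2) *\<^sub>R y \<in> A" for t1 t2
  proof (rule minkowski_functional_le)
    have "(t1 / (t1 + t2)) *\<^sub>R ((1/t1) *\<^sub>R x) + (t2 / (t1 + t2)) *\<^sub>R ((1/t2) *\<^sub>R y) \<in> A"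
      using t1 t2 by (intro convexD[OF A]) (simp_all add: add_divide_distrib[symmetric])
    moreover have "t1 / (t1 + t2) * (1/t1) = 1 / (t1 + t2)" "t2 / (t1 + t2) * (1/t2) = 1 / (t1 + t2)"
      using t1 t2 by simp_all
    ultimately show "(1 / (t1 + t2)) *\<^sub>R (x + y) \<in> A" by (simp add: scaleR_add_right)
  qed (use t1 t2 in simp)
  hence "?m (x + y) - t1 \<le> ?m y" if "t1 > 0" "(1/t1) *\<^sub>R x \<in> A" for t1
    using that by (intro minkowski_functional_greatest) (fastforce simp: diff_le_eq add.commute)
  hence "?m (x + y) - ?m y \<le> ?m x"
    by (intro minkowski_functional_greatest) (simp add: diff_le_eq add.commute)
  thus "?m (x + y) \<le> ?m x + ?m y" by simp
next
  fix c :: real and x assume c: "c > 0"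
  have "minkowski_functional A (c *\<^sub>R x) \<le> c * t" if t: "t > 0" "(1/t) *\<^sub>R x \<in> A" for t
  proof (rule minkowski_functional_le)
    have "1 / (c * t) * c = 1 / t" using c by simp
    thus "(1 / (c * t)) *\<^sub>R (c *\<^sub>R x) \<in> A" using t by simp
  qed (use c t in simp)
  hence "minkowski_functional A (c *\<^sub>R x) / c \<le> minkowski_functional A x"
    using c by (intro minkowski_functional_greatest) (simp add: pos_divide_le_eq mult.commute)
  thus "minkowski_functional A (c *\<^sub>R x) \<le> c * minkowski_functional A x"
    using c by (simp add: pos_divide_le_eq mult.commute)
qed

end

text \<open>Separation of a point \<open>z\<close> from a bounded closed convex set \<open>K \<ni> 0\<close>: the Minkowski functional
  of the open \<open>r\<close>-neighbourhood of \<open>K\<close>, with \<open>r\<close> the distance of \<open>z\<close>, is dominated by a multiple of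
  the norm and is \<open>\<ge> 1\<close> at \<open>z\<close> but uniformly \<open>< 1\<close> on \<open>K\<close>.\<close>

lemma separation_closed_convex_bounded_0:
  fixes K :: "'a::real_normed_vector set"
  assumes K0: "0 \<in> K" and closed: "closed K" and convex: "convex K" and bounded: "bounded K"
    and z: "z \<notin> K"
  obtains f :: "'a \<Rightarrow> real" and s where "bounded_linear f" "s < f z" "\<And>k. k \<in> K \<Longrightarrow> f k \<le> s"
proof -
  obtain B where B: "B > 0" "\<And>k. k \<in> K \<Longrightarrow> norm k \<le> B"
    using bounded unfolding bounded_pos by blast
  define r where "r = infdist z K"
  have r: "r > 0" unfolding r_def using infdist_pos_not_in_closed[OF closed _ z] K0 by blast
  define A where "A = (\<Union>k\<in>K. \<Union>b\<in>ball 0 r. {k + b})"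
  have A: "convex A" unfolding A_def by (intro convex_sums convex convex_ball)
  have ball: "ball 0 r \<subseteq> A" using K0 unfolding A_def by force
  have "z \<notin> A"
  proof
    assume "z \<in> A"
    then obtain k b where "k \<in> K" "norm b < r" "z = k + b" unfolding A_def by auto
    hence "dist z k < infdist z K" by (simp add: dist_norm r_def)
    with infdist_le[OF \<open>k \<in> K\<close>, of z] show False by simp
  qed
  hence one_le: "1 \<le> minkowski_functional A z"
    by (rule one_le_minkowski_functional[OF r ball A])
  define \<delta> where "\<delta> = r / (2 * B)"
  have \<delta>: "\<delta> > 0" "\<delta> * B < r" using r B by (simp_all add: \<delta>_def)
  have below: "minkowski_functional A k \<le> 1 / (1 + \<delta>)" if "k \<in> K" for k
  proof (rule minkowski_functional_le[OF r ball])
    have "\<delta> * norm k \<le> \<delta> * B" using B(2)[OF that] \<delta> by (intro mult_left_mono) simp_all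
    moreover have "norm (\<delta> *\<^sub>R k) = \<delta> * norm k" using \<delta> by simp
    ultimately have "norm (\<delta> *\<^sub>R k) < r" using \<delta> by linarith
    hence "k + \<delta> *\<^sub>R k \<in> A" using that unfolding A_def by force
    thus "(1 / (1 / (1 + \<delta>))) *\<^sub>R k \<in> A" by (simp add: algebra_simps)
  qed (use \<delta> in simp)
  obtain f where f: "linear f" "\<And>x. f x \<le> minkowski_functional A x" "f z = minkowski_functional A z"
    using linear_below_sublinear_attaining[OF sublinear_minkowski_functional[OF r ball A]] by blast
  show ?thesis
  proof (rule that)
    show "bounded_linear f"
    proof (rule linear_bounded_above_imp_bounded_linear[OF f(1)])
      show "f x \<le> (1 / r) * norm x" for x
        using order.trans[OF f(2) minkowski_functional_le_norm[OF r ball]] by simp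
    qed
    show "f k \<le> 1 / (1 + \<delta>)" if "k \<in> K" for k using f(2)[of k] below[OF that] by simp
    have "1 / (1 + \<delta>) < 1" using \<delta> by simp
    thus "1 / (1 + \<delta>) < f z" using one_le f(3) by simp
  qed
qed

lemma separation_closed_convex_bounded:
  fixes K :: "'a::real_normed_vector set"
  assumes ne: "K \<noteq> {}" and closed: "closed K" and convex: "convex K" and bounded: "bounded K"
    and z: "z \<notin> K"
  obtains f :: "'a \<Rightarrow> real" and s where "bounded_linear f" "s < f z" "\<And>k. k \<in> K \<Longrightarrow> f k \<le> s"
proof -
  obtain k0 where k0: "k0 \<in> K" using ne by blast
  let ?K = "(\<lambda>k. k - k0) ` K"
  have "0 \<in> ?K" "closed ?K" "convex ?K" "bounded ?K" "z - k0 \<notin> ?K"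
    using k0 closed convex bounded z
    by (auto intro: closed_translation_subtract convex_translation_subtract bounded_translation_minus)
  then obtain f :: "'a \<Rightarrow> real" and s
    where f: "bounded_linear f" "s < f (z - k0)" "\<And>k. k \<in> ?K \<Longrightarrow> f k \<le> s"
    by (metis separation_closed_convex_bounded_0)
  show ?thesis
  proof (rule that[OF f(1)])
    show "s + f k0 < f z" using f(2) linear_diff[OF bounded_linear.linear[OF f(1)]] by simp
    show "f k \<le> s + f k0" if "k \<in> K" for k
      using f(3)[of "k - k0"] that linear_diff[OF bounded_linear.linear[OF f(1)]] by simp
  qed
qed

text \<open>For a bounded sequence this is its limes superior; it is real-valued, unlike \<open>limsup\<close>.\<close>

definition real_limsup :: "(nat \<Rightarrow> real) \<Rightarrow> real" where
  "real_limsup a = Inf {s. eventually (\<lambda>n. a n \<le> s) sequentially}"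

context
  fixes a :: "nat \<Rightarrow> real" and B :: real
  assumes bound: "\<And>n. \<bar>a n\<bar> \<le> B"
begin

lemma real_limsup_le:
  assumes "eventually (\<lambda>n. a n \<le> s) sequentially"
  shows "real_limsup a \<le> s"
  unfolding real_limsup_def
proof (rule cInf_lower[OF _ bdd_belowI])
  fix s' assume "s' \<in> {s. eventually (\<lambda>n. a n \<le> s) sequentially}"
  then obtain n where "a n \<le> s'" by (auto dest: eventually_happens)
  thus "- B \<le> s'" using bound[of n] by linarith
qed (use assms in simp)

lemma real_limsup_greatest:
  assumes "\<And>s. eventually (\<lambda>n. a n \<le> s) sequentially \<Longrightarrow> m \<le> s"
  shows "m \<le> real_limsup a"
  unfolding real_limsup_def
proof (rule cInf_greatest)
  have "eventually (\<lambda>n. a n \<le> B) sequentially" using bound by (simp add: abs_le_iff)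
  thus "{s. eventually (\<lambda>n. a n \<le> s) sequentially} \<noteq> {}" by blast
qed (use assms in simp)

end

lemma real_limsup_add_le:
  assumes a: "\<And>n. \<bar>a n\<bar> \<le> A" and b: "\<And>n. \<bar>b n\<bar> \<le> B"
  shows "real_limsup (\<lambda>n. a n + b n) \<le> real_limsup a + real_limsup b"
proof -
  have ab: "\<bar>a n + b n\<bar> \<le> A + B" for n using a[of n] b[of n] by linarith
  have "real_limsup (\<lambda>n. a n + b n) - s \<le> real_limsup b"
    if s: "eventually (\<lambda>n. a n \<le> s) sequentially" for s
  proof (rule real_limsup_greatest[OF b])
    fix t assume "eventually (\<lambda>n. b n \<le> t) sequentially"
    with s have "eventually (\<lambda>n. a n + b n \<le> s + t) sequentially"
      by eventually_elim simp
    thus "real_limsup (\<lambda>n. a n + b n) - s \<le> t" using real_limsup_le[OF ab] by fastforce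
  qed
  hence "real_limsup (\<lambda>n. a n + b n) - real_limsup b \<le> real_limsup a"
    by (intro real_limsup_greatest[OF a]) (simp add: algebra_simps)
  thus ?thesis by simp
qed

lemma real_limsup_scale_le:
  assumes a: "\<And>n. \<bar>a n\<bar> \<le> A" and c: "c > 0"
  shows "real_limsup (\<lambda>n. c * a n) \<le> c * real_limsup a"
proof -
  have ca: "\<bar>c * a n\<bar> \<le> c * A" for n using a[of n] c by (simp add: abs_mult)
  have "real_limsup (\<lambda>n. c * a n) / c \<le> real_limsup a"
  proof (rule real_limsup_greatest[OF a])
    fix s assume "eventually (\<lambda>n. a n \<le> s) sequentially"
    hence "eventually (\<lambda>n. c * a n \<le> c * s) sequentially"
      by eventually_elim (use c in simp)
    thus "real_limsup (\<lambda>n. c * a n) / c \<le> s"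
      using real_limsup_le[OF ca] c by (simp add: pos_divide_le_eq mult.commute)
  qed
  thus ?thesis using c by (simp add: pos_divide_le_eq mult.commute)
qed

lemma reflexive_space_limsup_point:
  fixes x :: "nat \<Rightarrow> 'v::banach"
  assumes refl: "reflexive_space TYPE('v)" and M: "\<And>n. norm (x n) \<le> M"
  obtains x0 where
    "\<And>(f :: 'v \<Rightarrow> real) s. bounded_linear f \<Longrightarrow> eventually (\<lambda>n. f (x n) \<le> s) sequentially \<Longrightarrow> f x0 \<le> s"
proof -
  define q where "q f = real_limsup (\<lambda>n. blinfun_apply f (x n))" for f :: "'v \<Rightarrow>\<^sub>L real"
  have bound: "\<bar>blinfun_apply f (x n)\<bar> \<le> norm f * M" for f n
    using norm_blinfun[of f "x n"] M[of n] mult_left_mono[of "norm (x n)" M "norm f"] by simp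
  have "sublinear q"
  proof (rule sublinearI)
    show "q (f + h) \<le> q f + q h" for f h
      unfolding q_def blinfun.add_left by (rule real_limsup_add_le[OF bound bound])
    show "q (c *\<^sub>R f) \<le> c * q f" if "c > 0" for c f
      unfolding q_def scaleR_blinfun.rep_eq using real_limsup_scale_le[OF bound that] by simp
  qed
  then obtain \<Phi> where \<Phi>: "linear \<Phi>" "\<And>f. \<Phi> f \<le> q f" using linear_below_sublinear by blast
  have "q f \<le> M * norm f" for f
    unfolding q_def using bound[of f] by (intro real_limsup_le[OF bound]) (simp add: abs_le_iff mult.commute)
  hence "\<Phi> f \<le> M * norm f" for f using \<Phi>(2)[of f] by (meson order.trans)
  hence "bounded_linear \<Phi>" by (rule linear_bounded_above_imp_bounded_linear[OF \<Phi>(1)])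
  then obtain x0 where x0: "\<And>f. \<Phi> f = blinfun_apply f x0"
    using refl unfolding reflexive_space_def by (metis bounded_linear_Blinfun_apply)
  show ?thesis
  proof (rule that)
    fix f :: "'v \<Rightarrow> real" and s assume f: "bounded_linear f"
      and ev: "eventually (\<lambda>n. f (x n) \<le> s) sequentially"
    have "q (Blinfun f) \<le> s"
      unfolding q_def bounded_linear_Blinfun_apply[OF f] using bound[of "Blinfun f"] ev
      by (intro real_limsup_le) (auto simp: bounded_linear_Blinfun_apply[OF f])
    thus "f x0 \<le> s" using \<Phi>(2)[of "Blinfun f"] x0 bounded_linear_Blinfun_apply[OF f] by simp
  qed
qed

lemma reflexive_space_bounded_sequence_weak_cluster:
  fixes x :: "nat \<Rightarrow> 'v::banach"
  assumes refl: "reflexive_space TYPE('v)" and M: "\<And>n. norm (x n) \<le> M"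
  obtains x0 where "\<And>K. closed K \<Longrightarrow> convex K \<Longrightarrow> bounded K \<Longrightarrow>
    eventually (\<lambda>n. x n \<in> K) sequentially \<Longrightarrow> x0 \<in> K"
proof -
  obtain x0 where x0: "\<And>(f :: 'v \<Rightarrow> real) s. bounded_linear f \<Longrightarrow>
      eventually (\<lambda>n. f (x n) \<le> s) sequentially \<Longrightarrow> f x0 \<le> s"
    using reflexive_space_limsup_point[where x=x, OF refl M] by blast
  have "x0 \<in> K" if K: "closed K" "convex K" "bounded K" and ev: "eventually (\<lambda>n. x n \<in> K) sequentially"
    for K
  proof (rule ccontr)
    assume out: "x0 \<notin> K"
    have "K \<noteq> {}" using eventually_happens[OF ev] by auto
    then obtain f :: "'v \<Rightarrow> real" and s
      where f: "bounded_linear f" "s < f x0" "\<And>k. k \<in> K \<Longrightarrow> f k \<le> s"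
      using K out by (metis separation_closed_convex_bounded)
    have "eventually (\<lambda>n. f (x n) \<le> s) sequentially" using ev by eventually_elim (rule f(3))
    hence "f x0 \<le> s" by (rule x0[OF f(1)])
    with f(2) show False by simp
  qed
  thus ?thesis using that by blast
qed

lemma minimizing_sequence_INF_norm:
  fixes C :: "'a::real_normed_vector set"
  assumes ne: "C \<noteq> {}"
  obtains x where "\<And>n. x n \<in> C" "\<And>n. norm (g - x n) < (INF v\<in>C. norm (g - v)) + 1 / real (Suc n)"
proof -
  have "\<exists>v\<in>C. norm (g - v) < (INF v\<in>C. norm (g - v)) + 1 / real (Suc n)" for n
    using cInf_lessD[of "(\<lambda>v. norm (g - v)) ` C"] ne by simp
  thus ?thesis using that by metis
qed

lemma exists_nearest_point_reflexive_space:
  fixes C :: "'v::banach set"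
  assumes refl: "reflexive_space TYPE('v)" and ne: "C \<noteq> {}" and closed: "closed C" and convex: "convex C"
  shows "\<exists>u\<in>C. norm (g - u) = (INF v\<in>C. norm (g - v))"
proof -
  define d where "d = (INF v\<in>C. norm (g - v))"
  have d_le: "d \<le> norm (g - v)" if "v \<in> C" for v
    unfolding d_def by (rule cINF_lower[OF bdd_belowI2[where m=0] that]) simp
  obtain x where x: "\<And>n. x n \<in> C" "\<And>n. norm (g - x n) < d + 1 / real (Suc n)"
    using minimizing_sequence_INF_norm[OF ne] unfolding d_def by blast
  have "norm (x n) \<le> norm g + (d + 1)" for n
  proof -
    have "norm (x n) \<le> norm g + norm (g - x n)" using norm_triangle_ineq4[of g "g - x n"] by simp
    moreover have "1 / real (Suc n) \<le> 1" by simp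
    ultimately show ?thesis using x(2)[of n] by linarith
  qed
  then obtain x0 where x0: "\<And>K. closed K \<Longrightarrow> convex K \<Longrightarrow> bounded K \<Longrightarrow>
      eventually (\<lambda>n. x n \<in> K) sequentially \<Longrightarrow> x0 \<in> K"
    using reflexive_space_bounded_sequence_weak_cluster[where x=x, OF refl] by blast
  have x0_mem: "x0 \<in> C \<inter> cball g (d + 1 / real (Suc n))" for n
  proof (rule x0)
    show "closed (C \<inter> cball g (d + 1 / real (Suc n)))" using closed by (intro closed_Int closed_cball)
    show "convex (C \<inter> cball g (d + 1 / real (Suc n)))" using convex by (simp add: convex_Int)
    have "x m \<in> C \<inter> cball g (d + 1 / real (Suc n))" if "m \<ge> n" for m
    proof -
      have "1 / real (Suc m) \<le> 1 / real (Suc n)" using that by (simp add: frac_le)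
      hence "norm (g - x m) \<le> d + 1 / real (Suc n)" using x(2)[of m] by linarith
      thus ?thesis using x(1)[of m] by (simp add: dist_norm)
    qed
    thus "eventually (\<lambda>m. x m \<in> C \<inter> cball g (d + 1 / real (Suc n))) sequentially"
      by (rule eventually_sequentiallyI)
  qed (simp add: bounded_Int)
  have "norm (g - x0) \<le> d"
  proof (rule field_le_epsilon)
    fix e :: real assume "e > 0"
    then obtain n where "1 / real (Suc n) < e" by (rule nat_approx_posE)
    thus "norm (g - x0) \<le> d + e" using x0_mem[of n] by (simp add: dist_norm)
  qed
  moreover have "x0 \<in> C" using x0_mem[of 0] by blast
  ultimately have "norm (g - x0) = d" using d_le by (simp add: order.antisym)
  with \<open>x0 \<in> C\<close> show ?thesis unfolding d_def by blast
qed

lemma strictly_convex_spaceD: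
  fixes x y :: "'a::real_normed_vector"
  shows "strictly_convex_space TYPE('a) \<Longrightarrow> norm x = 1 \<Longrightarrow> norm y = 1 \<Longrightarrow> x \<noteq> y \<Longrightarrow>
    norm ((1/2) *\<^sub>R (x + y)) < 1"
  unfolding strictly_convex_space_def by simp

lemma nearest_point_unique_strictly_convex:
  fixes C :: "'v::real_normed_vector set"
  assumes sc: "strictly_convex_space TYPE('v)" and convex: "convex C"
    and u1: "u1 \<in> C" "norm (g - u1) = (INF v\<in>C. norm (g - v))"
    and u2: "u2 \<in> C" "norm (g - u2) = (INF v\<in>C. norm (g - v))"
  shows "u1 = u2"
proof (rule ccontr)
  define d where "d = (INF v\<in>C. norm (g - v))"
  have d_le: "d \<le> norm (g - v)" if "v \<in> C" for v
    unfolding d_def by (rule cINF_lower[OF bdd_belowI2[where m=0] that]) simp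
  assume ne: "u1 \<noteq> u2"
  have "d \<noteq> 0" using u1 u2 ne by (auto simp: d_def)
  moreover have "d \<ge> 0" using u1(2) norm_ge_zero unfolding d_def by metis
  ultimately have d: "d > 0" by simp
  define a where "a = (1/d) *\<^sub>R (g - u1)"
  define b where "b = (1/d) *\<^sub>R (g - u2)"
  have "norm a = 1" "norm b = 1" "a \<noteq> b" using d u1 u2 ne by (auto simp: a_def b_def d_def)
  hence lt: "norm ((1/2) *\<^sub>R (a + b)) < 1" by (rule strictly_convex_spaceD[OF sc])
  define m where "m = (1/2) *\<^sub>R u1 + (1/2) *\<^sub>R u2"
  have "m \<in> C" unfolding m_def by (rule convexD[OF convex u1(1) u2(1)]) simp_all
  moreover have "d *\<^sub>R ((1/2) *\<^sub>R (a + b)) = (1/2) *\<^sub>R ((g - u1) + (g - u2))"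
    using d by (simp add: a_def b_def scaleR_add_right)
  hence "g - m = d *\<^sub>R ((1/2) *\<^sub>R (a + b))"
    using scaleR_half_double[of g] by (simp add: m_def algebra_simps)
  hence "norm (g - m) < d" using lt d by simp
  ultimately show False using d_le by fastforce
qed

lemma linear_preorder_refl: "linear_preorder le \<Longrightarrow> le a a"
  unfolding linear_preorder_def by simp

lemma linear_preorder_trans: "linear_preorder le \<Longrightarrow> le a b \<Longrightarrow> le b c \<Longrightarrow> le a c"
  unfolding linear_preorder_def by (elim conjE allE impE) auto

lemma linear_preorder_add_left: "linear_preorder le \<Longrightarrow> le b c \<Longrightarrow> le (a + b) (a + c)"
  unfolding linear_preorder_def by (elim conjE allE impE) auto

lemma linear_preorder_scaleR: "linear_preorder le \<Longrightarrow> le a b \<Longrightarrow> \<alpha> \<ge> 0 \<Longrightarrow> le (\<alpha> *\<^sub>R a) (\<alpha> *\<^sub>R b)"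
  unfolding linear_preorder_def by (elim conjE allE impE) auto

lemma linear_preorder_nonneg_iff: "linear_preorder le \<Longrightarrow> le 0 a \<longleftrightarrow> le (- a) 0"
  using linear_preorder_add_left[of le 0 a "- a"] linear_preorder_add_left[of le "- a" 0 a] by auto

lemma linear_preorder_combination:
  assumes le: "linear_preorder le" and "le x x'" "le y y'" "a \<ge> 0" "b \<ge> 0"
  shows "le (a *\<^sub>R x + b *\<^sub>R y) (a *\<^sub>R x' + b *\<^sub>R y')"
proof (rule linear_preorder_trans[OF le])
  show "le (a *\<^sub>R x + b *\<^sub>R y) (a *\<^sub>R x + b *\<^sub>R y')"
    using assms(3,5) by (rule linear_preorder_add_left[OF le linear_preorder_scaleR[OF le]])
  have "le (b *\<^sub>R y' + a *\<^sub>R x) (b *\<^sub>R y' + a *\<^sub>R x')"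
    using assms(2,4) by (rule linear_preorder_add_left[OF le linear_preorder_scaleR[OF le]])
  thus "le (a *\<^sub>R x + b *\<^sub>R y') (a *\<^sub>R x' + b *\<^sub>R y')" by (simp add: add.commute)
qed

lemma convex_Omega_down:
  assumes lin: "linear iV" and le: "linear_preorder le"
  shows "convex (Omega_down iV le \<psi>1 \<psi>2)"
proof (rule convexI)
  fix u v and a b :: real
  assume u: "u \<in> Omega_down iV le \<psi>1 \<psi>2" and v: "v \<in> Omega_down iV le \<psi>1 \<psi>2"
    and ab: "0 \<le> a" "0 \<le> b" "a + b = 1"
  have u': "le 0 (iV u)" "le (iV u) \<psi>1" "le (iV u) \<psi>2"
    and v': "le 0 (iV v)" "le (iV v) \<psi>1" "le (iV v) \<psi>2"
    using u v unfolding Omega_down_def by simp_all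
  have iV: "iV (a *\<^sub>R u + b *\<^sub>R v) = a *\<^sub>R iV u + b *\<^sub>R iV v"
    using lin by (simp add: linear_add linear_scale)
  have \<psi>: "a *\<^sub>R \<psi>1 + b *\<^sub>R \<psi>1 = \<psi>1" "a *\<^sub>R \<psi>2 + b *\<^sub>R \<psi>2 = \<psi>2"
    using ab(3) by (simp_all flip: scaleR_add_left)
  have "le 0 (iV (a *\<^sub>R u + b *\<^sub>R v))"
    using linear_preorder_combination[OF le u'(1) v'(1) ab(1,2)] by (simp add: iV)
  moreover have "le (iV (a *\<^sub>R u + b *\<^sub>R v)) \<psi>1"
    using linear_preorder_combination[OF le u'(2) v'(2) ab(1,2)] by (simp add: iV \<psi>)
  moreover have "le (iV (a *\<^sub>R u + b *\<^sub>R v)) \<psi>2"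
    using linear_preorder_combination[OF le u'(3) v'(3) ab(1,2)] by (simp add: iV \<psi>)
  ultimately show "a *\<^sub>R u + b *\<^sub>R v \<in> Omega_down iV le \<psi>1 \<psi>2"
    unfolding Omega_down_def by simp
qed

lemma closed_Omega_down:
  assumes "preordered_gradient_space iV iW R le"
  shows "closed (Omega_down iV le \<psi>1 \<psi>2)"
proof -
  have lin: "linear iV" and le: "linear_preorder le"
    and lim: "\<And>u x \<psi>. \<forall>i. le (iV (u i)) \<psi> \<Longrightarrow> u \<longlonglongrightarrow> x \<Longrightarrow> le (iV x) \<psi>"
    using assms by (simp_all add: preordered_gradient_space_def gradient_space_def)
  have below: "closed {v. le (iV v) \<psi>}" for \<psi>
    unfolding closed_sequential_limits by (auto intro: lim)
  have "closed (uminus -` {v. le (iV v) 0})"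
    by (rule continuous_closed_vimage[OF below]) (intro continuous_intros)
  moreover have "uminus -` {v. le (iV v) 0} = {v. le 0 (iV v)}"
    using linear_preorder_nonneg_iff[OF le] linear_neg[OF lin] by auto
  ultimately have "closed {v. le 0 (iV v)}" by simp
  moreover have "Omega_down iV le \<psi>1 \<psi>2 = {v. le 0 (iV v)} \<inter> {v. le (iV v) \<psi>1} \<inter> {v. le (iV v) \<psi>2}"
    unfolding Omega_down_def by blast
  ultimately show ?thesis using below by (simp add: closed_Int)
qed

theorem mainTheorem16:
  fixes iV :: "'v::banach \<Rightarrow> 'vt::real_vector" and iW :: "'w::banach \<Rightarrow> 'wt::real_vector"
    and R :: "('vt \<times> 'wt) set" and le :: "'vt \<Rightarrow> 'vt \<Rightarrow> bool"
    and \<psi>1 \<psi>2 :: 'vt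
  assumes "ordered_gradient_space iV iW R le"
    and "\<psi>1 \<in> B_plus iV le" and "\<psi>2 \<in> B_plus iV le"
  shows "\<exists>!u. u \<in> Omega_down iV le \<psi>1 \<psi>2 \<and>
           norm (gmax iV le \<psi>1 \<psi>2 - u) =
             (INF v \<in> Omega_down iV le \<psi>1 \<psi>2. norm (gmax iV le \<psi>1 \<psi>2 - v))"
proof -
  let ?C = "Omega_down iV le \<psi>1 \<psi>2" and ?g = "gmax iV le \<psi>1 \<psi>2"
  have pre: "preordered_gradient_space iV iW R le" and sc: "strictly_convex_space TYPE('v)"
    using assms(1) by (simp_all add: ordered_gradient_space_def)
  hence lin: "linear iV" and le: "linear_preorder le" and refl: "reflexive_space TYPE('v)"
    by (simp_all add: preordered_gradient_space_def gradient_space_def)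
  have convex: "convex ?C" by (rule convex_Omega_down[OF lin le])
  have "0 \<in> ?C"
    using assms(2,3) linear_preorder_refl[OF le] linear_0[OF lin] by (simp add: B_plus_def Omega_down_def)
  then obtain u where u: "u \<in> ?C" "norm (?g - u) = (INF v\<in>?C. norm (?g - v))"
    using exists_nearest_point_reflexive_space[OF refl _ closed_Omega_down[OF pre] convex] by blast
  show ?thesis
  proof (rule ex1I)
    show "u \<in> ?C \<and> norm (?g - u) = (INF v\<in>?C. norm (?g - v))" using u by blast
    show "v = u" if "v \<in> ?C \<and> norm (?g - v) = (INF v\<in>?C. norm (?g - v))" for v
      using that u by (blast intro: nearest_point_unique_strictly_convex[OF sc convex])
  qed
qed

end
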